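(* An even nonnegative integer $n$ satisfies $v(n)=1$ if and only if $n\in\{10,12\}$.
   Context: A hyperbinary expansion of a nonnegative integer $n$ is a word $x_0\cdots x_k$ over $\{0,1,2\}$ with $x_0\ne0$ and $\sum_i x_i2^{k-i}=n$. The empty word is the unique hyperbinary expansion of $0$. Write $\mathcal H(n)$ for the set of such expansions and $b(n)=|\mathcal H(n)|$. $A(n)$ is the directed graph on $\mathcal H(n)$ with an arc from $\mathbf x02\mathbf y$ to $\mathbf x10\mathbf y$, from $2\mathbf y$ to $10\mathbf y$, and from $\mathbf x12\mathbf y$ to $\mathbf x20\mathbf y$, for arbitrary words $\mathbf x,\mathbf y$ whenever both endpoints lie in $\mathcal H(n)$. $A(n)$ is connected. $v(n)$ denotes the cyclomatic number of $A(n)$: (number of arcs) $-\,b(n)+1$. *)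

theory Defs
  imports Main
begin

text \<open>Value of a digit word x_0 ... x_k (most significant digit first):
  sum_i x_i 2^(k-i).\<close>
definition word_val :: "nat list \<Rightarrow> nat" where
  "word_val xs = (\<Sum>i<length xs. xs ! i * 2 ^ (length xs - 1 - i))"

text \<open>Hyperbinary expansions of n: words over {0,1,2} with nonzero first letter
  (the empty word is allowed and represents 0).\<close>
definition hyp :: "nat \<Rightarrow> nat list set" where
  "hyp n = {xs. set xs \<subseteq> {0,1,2} \<and> (xs \<noteq> [] \<longrightarrow> hd xs \<noteq> 0) \<and> word_val xs = n}"

definition b :: "nat \<Rightarrow> nat" where
  "b n = card (hyp n)"

definition arcs :: "nat \<Rightarrow> (nat list \<times> nat list) set" where
  "arcs n = {(u, w). u \<in> hyp n \<and> w \<in> hyp n \<and>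
     ((\<exists>x y. u = x @ [0,2] @ y \<and> w = x @ [1,0] @ y) \<or>
      (\<exists>y. u = 2 # y \<and> w = [1,0] @ y) \<or>
      (\<exists>x y. u = x @ [1,2] @ y \<and> w = x @ [2,0] @ y))}"

definition v :: "nat \<Rightarrow> int" where
  "v n = int (card (arcs n)) - int (b n) + 1"

end

theory Submission
  imports Defs
begin

text \<open>Splitting off the last letter gives b(2m+1) = b(m) and b(2m+2) = b(m+1) + b(m). An arc
  either keeps the last letter or turns a final 2 into 0 while incrementing the remaining prefix;
  counting the latter arcs gives #arcs(2m+2) = #arcs(m+1) + #arcs(m) + b(m div 2) and
  #arcs(2m+1) = #arcs(m). Hence v(2m+1) = v(m) and v(2m+2) = v(m+1) + v(m) + b(m div 2) - 1, so
  v is nonnegative and v(2m+2) = 1 forces b(m div 2) \<le> 2, i.e. m div 2 + 1 is 2^j or 3 * 2^j.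
  Along these two families the recursions give v(2m+2) = (j+1)(b(r) - 1) with r = 0 resp. r = 2,
  which is 1 only for j = 0, r = 2, i.e. m div 2 = 2.\<close>

lemma nat_parity_cases:
  fixes n :: nat
  obtains "n = 0" | m where "n = Suc (2 * m)" | m where "n = Suc (Suc (2 * m))"
  by (metis evenE oddE add_2_eq_Suc' mult_Suc_right not0_implies_Suc nat.simps(3) Suc_eq_plus1)

lemma word_val_Nil [simp]: "word_val [] = 0"
  by (simp add: word_val_def)

lemma word_val_snoc [simp]: "word_val (xs @ [d]) = 2 * word_val xs + d"
proof -
  have shift: "(xs @ [d]) ! i * 2 ^ (length xs - i) = 2 * (xs ! i * 2 ^ (length xs - 1 - i))"
    if "i < length xs" for i
  proof -
    from that have "length xs - i = Suc (length xs - 1 - i)" by simp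
    with that show ?thesis by (simp add: nth_append)
  qed
  have "word_val (xs @ [d]) = (\<Sum>i<length xs. (xs @ [d]) ! i * 2 ^ (length xs - i)) + d"
    by (simp add: word_val_def)
  also have "\<dots> = 2 * word_val xs + d"
    by (simp add: word_val_def sum_distrib_left shift)
  finally show ?thesis .
qed

lemma word_val_pos: "xs \<noteq> [] \<Longrightarrow> hd xs \<noteq> 0 \<Longrightarrow> word_val xs > 0"
  by (induction xs rule: rev_induct) (auto simp: hd_append split: if_splits)

lemma snoc_mem_hyp_iff:
  "xs @ [d] \<in> hyp n \<longleftrightarrow> xs \<in> hyp (word_val xs) \<and> d \<le> 2 \<and> 2 * word_val xs + d = n \<and> (xs = [] \<longrightarrow> d \<noteq> 0)"
  unfolding hyp_def by (auto simp: hd_append)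

lemma word_val_of_mem_hyp: "xs \<in> hyp n \<Longrightarrow> word_val xs = n"
  by (simp add: hyp_def)

lemma Nil_mem_hyp_iff [simp]: "[] \<in> hyp n \<longleftrightarrow> n = 0"
  by (auto simp: hyp_def)

lemma hyp_0: "hyp 0 = {[]}"
  unfolding hyp_def using word_val_pos by fastforce

lemma mem_hyp_Suc_double_iff: "p \<in> hyp (Suc (2 * m)) \<longleftrightarrow> (\<exists>u. p = u @ [1] \<and> u \<in> hyp m)"
proof
  assume p: "p \<in> hyp (Suc (2 * m))"
  then have "p \<noteq> []" by auto
  then obtain u d where ud: "p = u @ [d]" by (metis rev_exhaust)
  with p have u: "u \<in> hyp (word_val u)" and "d \<le> 2" "2 * word_val u + d = Suc (2 * m)"
    by (simp_all add: snoc_mem_hyp_iff)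
  then have "d = 1" "word_val u = m" by presburger+
  with ud u show "\<exists>u. p = u @ [1] \<and> u \<in> hyp m" by auto
qed (auto simp: snoc_mem_hyp_iff word_val_of_mem_hyp)

lemma mem_hyp_Suc_Suc_double_iff:
  "p \<in> hyp (Suc (Suc (2 * m))) \<longleftrightarrow>
     (\<exists>u. p = u @ [0] \<and> u \<in> hyp (Suc m)) \<or> (\<exists>u. p = u @ [2] \<and> u \<in> hyp m)"
proof
  assume p: "p \<in> hyp (Suc (Suc (2 * m)))"
  then have "p \<noteq> []" by auto
  then obtain u d where ud: "p = u @ [d]" by (metis rev_exhaust)
  with p have u: "u \<in> hyp (word_val u)" and "d \<le> 2" "2 * word_val u + d = Suc (Suc (2 * m))"
    by (simp_all add: snoc_mem_hyp_iff)
  then have "d = 0 \<and> word_val u = Suc m \<or> d = 2 \<and> word_val u = m" by presburger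
  with ud u show "(\<exists>u. p = u @ [0] \<and> u \<in> hyp (Suc m)) \<or> (\<exists>u. p = u @ [2] \<and> u \<in> hyp m)"
    by auto
qed (auto simp: snoc_mem_hyp_iff word_val_of_mem_hyp)

lemma hyp_odd: "hyp (Suc (2 * m)) = (\<lambda>u. u @ [1]) ` hyp m"
  by (auto simp: mem_hyp_Suc_double_iff)

lemma hyp_even: "hyp (Suc (Suc (2 * m))) = (\<lambda>u. u @ [0]) ` hyp (Suc m) \<union> (\<lambda>u. u @ [2]) ` hyp m"
  by (auto simp: mem_hyp_Suc_Suc_double_iff)

lemma finite_hyp: "finite (hyp n)"
proof (induction n rule: less_induct)
  case (less n)
  then show ?case
    by (cases n rule: nat_parity_cases) (simp_all add: hyp_0 hyp_odd hyp_even)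
qed

lemma b_0: "b 0 = 1"
  by (simp add: b_def hyp_0)

lemma b_odd: "b (Suc (2 * m)) = b m"
  unfolding b_def hyp_odd by (simp add: card_image inj_on_def)

lemma b_even: "b (Suc (Suc (2 * m))) = b (Suc m) + b m"
  unfolding b_def hyp_even by (subst card_Un_disjoint) (auto simp: finite_hyp card_image inj_on_def)

lemma b_pos: "b n > 0"
proof (induction n rule: less_induct)
  case (less n)
  then show ?case
    by (cases n rule: nat_parity_cases) (simp_all add: b_0 b_odd b_even)
qed

lemma b_even_ge_2: "b (Suc (Suc (2 * m))) \<ge> 2"
  using b_pos[of m] b_pos[of "Suc m"] by (simp add: b_even)

lemma snoc_infix_replace_iff:
  "(\<exists>x y. u @ [a] = x @ [p, p'] @ y \<and> w @ [c] = x @ [q, q'] @ y) \<longleftrightarrow>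
     (\<exists>x y. u = x @ [p, p'] @ y \<and> w = x @ [q, q'] @ y) \<and> a = c \<or>
     a = p' \<and> c = q' \<and> (\<exists>x. u = x @ [p] \<and> w = x @ [q])"
proof
  assume "\<exists>x y. u @ [a] = x @ [p, p'] @ y \<and> w @ [c] = x @ [q, q'] @ y"
  then obtain x y where xy: "u @ [a] = x @ [p, p'] @ y" "w @ [c] = x @ [q, q'] @ y" by blast
  show "(\<exists>x y. u = x @ [p, p'] @ y \<and> w = x @ [q, q'] @ y) \<and> a = c \<or>
     a = p' \<and> c = q' \<and> (\<exists>x. u = x @ [p] \<and> w = x @ [q])"
  proof (cases y rule: rev_exhaust)
    case Nil
    with xy show ?thesis by simp
  next
    case (snoc y' z)
    with xy show ?thesis by auto
  qed
next
  show "(\<exists>x y. u = x @ [p, p'] @ y \<and> w = x @ [q, q'] @ y) \<and> a = c \<or>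
     a = p' \<and> c = q' \<and> (\<exists>x. u = x @ [p] \<and> w = x @ [q]) \<Longrightarrow>
     \<exists>x y. u @ [a] = x @ [p, p'] @ y \<and> w @ [c] = x @ [q, q'] @ y"
    by (metis append.assoc append_Cons append_Nil)
qed

lemma snoc_prefix_replace_iff:
  "(\<exists>y. u @ [a] = p # y \<and> w @ [c] = [q, q'] @ y) \<longleftrightarrow>
     (\<exists>y. u = p # y \<and> w = [q, q'] @ y) \<and> a = c \<or> a = p \<and> c = q' \<and> u = [] \<and> w = [q]"
  by (cases u; cases w rule: rev_exhaust) (auto simp: Cons_eq_append_conv)

definition move :: "nat list \<Rightarrow> nat list \<Rightarrow> bool" where
  "move u w \<longleftrightarrow>
     (\<exists>x y. u = x @ [0, 2] @ y \<and> w = x @ [1, 0] @ y) \<or>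
     (\<exists>y. u = 2 # y \<and> w = [1, 0] @ y) \<or>
     (\<exists>x y. u = x @ [1, 2] @ y \<and> w = x @ [2, 0] @ y)"

definition incr_last :: "nat list \<Rightarrow> nat list \<Rightarrow> bool" where
  "incr_last u w \<longleftrightarrow>
     u = [] \<and> w = [1] \<or> (\<exists>x. u = x @ [0] \<and> w = x @ [1]) \<or> (\<exists>x. u = x @ [1] \<and> w = x @ [2])"

lemma arcs_eq: "arcs n = {(u, w). u \<in> hyp n \<and> w \<in> hyp n \<and> move u w}"
  by (simp add: arcs_def move_def)

lemma move_snoc_iff:
  "move (u @ [a]) (w @ [c]) \<longleftrightarrow> move u w \<and> a = c \<or> a = 2 \<and> c = 0 \<and> incr_last u w"
  unfolding move_def incr_last_def snoc_infix_replace_iff snoc_prefix_replace_iff by blast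

lemma incr_last_snoc_iff: "incr_last (x @ [d]) w \<longleftrightarrow> d < 2 \<and> w = x @ [Suc d]"
  by (auto simp: incr_last_def less_2_cases_iff)

definition carry_arcs :: "nat \<Rightarrow> (nat list \<times> nat list) set" where
  "carry_arcs m = {(u @ [2], w @ [0]) | u w. u \<in> hyp m \<and> w \<in> hyp (Suc m) \<and> incr_last u w}"

lemma arcs_odd: "arcs (Suc (2 * m)) = map_prod (\<lambda>u. u @ [1]) (\<lambda>u. u @ [1]) ` arcs m"
proof (rule set_eqI, clarify)
  fix p q
  show "(p, q) \<in> arcs (Suc (2 * m)) \<longleftrightarrow> (p, q) \<in> map_prod (\<lambda>u. u @ [1]) (\<lambda>u. u @ [1]) ` arcs m"
    by (auto simp: arcs_eq mem_hyp_Suc_double_iff move_snoc_iff)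
qed

lemma arcs_even:
  "arcs (Suc (Suc (2 * m))) =
     map_prod (\<lambda>u. u @ [0]) (\<lambda>u. u @ [0]) ` arcs (Suc m) \<union>
     map_prod (\<lambda>u. u @ [2]) (\<lambda>u. u @ [2]) ` arcs m \<union> carry_arcs m"
proof (rule set_eqI, clarify)
  fix p q
  show "(p, q) \<in> arcs (Suc (Suc (2 * m))) \<longleftrightarrow>
    (p, q) \<in> map_prod (\<lambda>u. u @ [0]) (\<lambda>u. u @ [0]) ` arcs (Suc m) \<union>
     map_prod (\<lambda>u. u @ [2]) (\<lambda>u. u @ [2]) ` arcs m \<union> carry_arcs m"
    by (auto simp: arcs_eq carry_arcs_def mem_hyp_Suc_Suc_double_iff move_snoc_iff)
qed

lemma carry_arcs_0: "carry_arcs 0 = {([2], [1, 0])}"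
  by (auto simp: carry_arcs_def hyp_0 incr_last_def hyp_odd[of 0, simplified])

lemma carry_arcs_odd: "carry_arcs (Suc (2 * k)) = (\<lambda>x. (x @ [1, 2], x @ [2, 0])) ` hyp k"
proof
  show "carry_arcs (Suc (2 * k)) \<subseteq> (\<lambda>x. (x @ [1, 2], x @ [2, 0])) ` hyp k"
    by (auto simp: carry_arcs_def mem_hyp_Suc_double_iff incr_last_snoc_iff)
  show "(\<lambda>x. (x @ [1, 2], x @ [2, 0])) ` hyp k \<subseteq> carry_arcs (Suc (2 * k))"
  proof clarify
    fix x assume "x \<in> hyp k"
    then have "x @ [1] \<in> hyp (Suc (2 * k))" "x @ [2] \<in> hyp (Suc (Suc (2 * k)))"
      by (auto simp: mem_hyp_Suc_double_iff mem_hyp_Suc_Suc_double_iff)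
    then show "(x @ [1, 2], x @ [2, 0]) \<in> carry_arcs (Suc (2 * k))"
      unfolding carry_arcs_def by (force simp: incr_last_snoc_iff)
  qed
qed

lemma carry_arcs_even: "carry_arcs (Suc (Suc (2 * k))) = (\<lambda>x. (x @ [0, 2], x @ [1, 0])) ` hyp (Suc k)"
proof
  show "carry_arcs (Suc (Suc (2 * k))) \<subseteq> (\<lambda>x. (x @ [0, 2], x @ [1, 0])) ` hyp (Suc k)"
    by (auto simp: carry_arcs_def mem_hyp_Suc_Suc_double_iff incr_last_snoc_iff)
  show "(\<lambda>x. (x @ [0, 2], x @ [1, 0])) ` hyp (Suc k) \<subseteq> carry_arcs (Suc (Suc (2 * k)))"
  proof clarify
    fix x assume "x \<in> hyp (Suc k)"
    then have "x @ [0] \<in> hyp (Suc (Suc (2 * k)))" "x @ [1] \<in> hyp (Suc (2 * Suc k))"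
      by (auto simp only: mem_hyp_Suc_double_iff mem_hyp_Suc_Suc_double_iff)
    then show "(x @ [0, 2], x @ [1, 0]) \<in> carry_arcs (Suc (Suc (2 * k)))"
      unfolding carry_arcs_def by (force simp: incr_last_snoc_iff)
  qed
qed

lemma card_carry_arcs: "card (carry_arcs m) = b (m div 2)"
  by (cases m rule: nat_parity_cases)
    (simp_all add: b_def hyp_0 carry_arcs_0 carry_arcs_odd carry_arcs_even card_image inj_on_def)

lemma finite_arcs: "finite (arcs n)"
proof (rule finite_subset)
  show "arcs n \<subseteq> hyp n \<times> hyp n" by (auto simp: arcs_def)
qed (simp add: finite_hyp)

lemma finite_carry_arcs: "finite (carry_arcs m)"
  by (simp add: card_carry_arcs card_ge_0_finite b_pos flip: b_def)

lemma arcs_0: "arcs 0 = {}"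
  by (auto simp: arcs_eq hyp_0 move_def)

lemma inj_on_map_prod_snoc: "inj_on (map_prod (\<lambda>u. u @ [d]) (\<lambda>u. u @ [d])) A"
  by (auto simp: inj_on_def)

lemma card_arcs_odd: "card (arcs (Suc (2 * m))) = card (arcs m)"
  unfolding arcs_odd by (simp add: card_image inj_on_map_prod_snoc)

lemma card_arcs_even:
  "card (arcs (Suc (Suc (2 * m)))) = card (arcs (Suc m)) + card (arcs m) + b (m div 2)"
proof -
  let ?A = "map_prod (\<lambda>u. u @ [0]) (\<lambda>u. u @ [0]) ` arcs (Suc m)"
  let ?B = "map_prod (\<lambda>u. u @ [2]) (\<lambda>u. u @ [2]) ` arcs m"
  have "?A \<inter> ?B = {}" "(?A \<union> ?B) \<inter> carry_arcs m = {}"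
    by (auto simp: carry_arcs_def)
  then have "card (?A \<union> ?B \<union> carry_arcs m) = card ?A + card ?B + card (carry_arcs m)"
    by (simp add: card_Un_disjoint finite_arcs finite_carry_arcs)
  then show ?thesis
    by (simp add: arcs_even card_carry_arcs card_image inj_on_map_prod_snoc)
qed

lemma v_0: "v 0 = 0"
  by (simp add: v_def arcs_0 b_0)

lemma v_odd: "v (Suc (2 * m)) = v m"
  by (simp add: v_def card_arcs_odd b_odd)

lemma v_even: "v (Suc (Suc (2 * m))) = v (Suc m) + v m + int (b (m div 2)) - 1"
  by (simp add: v_def card_arcs_even b_even)

lemma v_nonneg: "v n \<ge> 0"
proof (induction n rule: less_induct)
  case (less n)
  show ?case
  proof (cases n rule: nat_parity_cases)
    case (3 m)
    with less[of m] less[of "Suc m"] b_pos[of "m div 2"] show ?thesis by (simp add: v_even)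
  qed (use less in \<open>simp_all add: v_0 v_odd\<close>)
qed

lemma odd_iterate_SucE:
  assumes "Suc q = 2 ^ Suc j * Suc r"
  obtains q' where "q = Suc (2 * q')" and "Suc q' = 2 ^ j * Suc r"
proof
  show "Suc (2 ^ j * Suc r - 1) = 2 ^ j * Suc r" by simp
  with assms show "q = Suc (2 * (2 ^ j * Suc r - 1))" by simp
qed

text \<open>\<open>Suc q = 2 ^ j * Suc r\<close> says that the binary expansion of \<open>q\<close> is that of \<open>r\<close>
  followed by \<open>j\<close> ones.\<close>

lemma b_v_odd_iterate:
  assumes "Suc q = 2 ^ j * Suc r"
  shows "b q = b r \<and> v q = v r"
  using assms
proof (induction j arbitrary: q)
  case (Suc j)
  obtain q' where "q = Suc (2 * q')" and "Suc q' = 2 ^ j * Suc r"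
    using Suc.prems by (rule odd_iterate_SucE)
  with Suc.IH show ?case by (simp add: b_odd v_odd)
qed simp

lemma v_double_odd_iterate:
  assumes "Suc q = 2 ^ j * Suc r"
  shows "v (2 * q) = v (2 * r) + int j * (v r + int (b r) - 1) \<and>
    v (Suc (Suc (2 * q))) = v (Suc (Suc (2 * r))) + int j * (v r + int (b r) - 1)"
  using assms
proof (induction j arbitrary: q)
  case (Suc j)
  obtain q' where q: "q = Suc (2 * q')" and q': "Suc q' = 2 ^ j * Suc r"
    using Suc.prems by (rule odd_iterate_SucE)
  have "v (2 * q) = v q' + v (2 * q') + int (b q') - 1"
    using v_even[of "2 * q'"] by (simp add: q v_odd)
  moreover have "v (Suc (Suc (2 * q))) = v (Suc (Suc (2 * q'))) + v q' + int (b q') - 1"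
    using v_even[of "Suc (2 * q')"] by (simp add: q v_odd)
  ultimately show ?case
    using Suc.IH[OF q'] b_v_odd_iterate[OF q'] by (simp add: algebra_simps)
qed simp

lemma b_2: "b 2 = 2"
  using b_even[of 0] b_odd[of 0] by (simp add: b_0 numeral_2_eq_2)

lemma v_eq_0_below_10: "n < 10 \<Longrightarrow> v n = 0"
proof (induction n rule: less_induct)
  case (less n)
  show ?case
  proof (cases n rule: nat_parity_cases)
    case (3 m)
    then have "m div 2 = 0 \<or> m div 2 = Suc (2 * 0)" using less.prems by auto
    then have "b (m div 2) = 1" by (auto simp only: b_odd b_0)
    with less 3 show ?thesis by (simp add: v_even)
  qed (use less in \<open>simp_all add: v_0 v_odd\<close>)
qed

lemma b_le_2_imp_odd_iterate: "b k \<le> 2 \<Longrightarrow> \<exists>j r. r \<in> {0, 2} \<and> Suc k = 2 ^ j * Suc r"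
proof (induction k rule: less_induct)
  case (less k)
  show ?case
  proof (cases k rule: nat_parity_cases)
    case 1
    then show ?thesis by (intro exI[of _ 0]) simp
  next
    case (2 m)
    with less.prems have "b m \<le> 2" by (simp add: b_odd)
    moreover from 2 have "m < k" by simp
    ultimately obtain j r where "r \<in> {0, 2}" "Suc m = 2 ^ j * Suc r"
      using less.IH by blast
    with 2 show ?thesis by (intro exI[of _ "Suc j"] exI[of _ r]) simp
  next
    case (3 m)
    with less.prems have b_sum: "b (Suc m) + b m \<le> 2" by (simp add: b_even)
    have "m = 0"
    proof (cases m rule: nat_parity_cases)
      case (2 i)
      with b_even_ge_2[of i] have "b (Suc m) \<ge> 2" by simp
      with b_sum b_pos[of m] show ?thesis by simp
    next
      case (3 i)
      with b_even_ge_2[of i] have "b m \<ge> 2" by simp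
      with b_sum b_pos[of "Suc m"] show ?thesis by simp
    qed
    with \<open>k = Suc (Suc (2 * m))\<close> show ?thesis by (intro exI[of _ 0] exI[of _ 2]) simp
  qed
qed

lemma v_even_of_odd_iterate:
  assumes "r \<in> {0, 2}" and "Suc (m div 2) = 2 ^ j * Suc r"
  shows "v (Suc (Suc (2 * m))) = int (Suc j) * (int (b r) - 1)"
proof -
  define k where "k = m div 2"
  have k: "Suc k = 2 ^ j * Suc r" using assms(2) by (simp add: k_def)
  have base: "v r = 0" "v (2 * r) = 0" "v (Suc (Suc (2 * r))) = 0"
    using assms(1) by (auto intro: v_eq_0_below_10)
  have bk: "b k = b r" and vk: "v k = 0"
    using b_v_odd_iterate[OF k] base by simp_all
  have double: "v (2 * k) = int j * (int (b r) - 1)" "v (Suc (Suc (2 * k))) = int j * (int (b r) - 1)"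
    using v_double_odd_iterate[OF k] base by simp_all
  have "v (Suc m) + v m = int j * (int (b r) - 1)"
  proof (cases "even m")
    case True
    then have "m = 2 * k" by (simp add: k_def)
    with vk double show ?thesis by (simp add: v_odd)
  next
    case False
    then have "m = Suc (2 * k)" by (simp add: k_def)
    with vk double show ?thesis by (simp add: v_odd)
  qed
  moreover have "v (Suc (Suc (2 * m))) = v (Suc m) + v m + int (b k) - 1"
    by (simp add: v_even k_def)
  ultimately show ?thesis
    using bk by (simp add: algebra_simps)
qed

theorem mainTheorem3:
  fixes n :: nat
  assumes "even n"
  shows "v n = 1 \<longleftrightarrow> n \<in> {10, 12}"
proof (cases n rule: nat_parity_cases)
  case 1
  then show ?thesis by (simp add: v_0)
next
  case (2 m)
  with assms show ?thesis by simp
next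
  case (3 m)
  show ?thesis
  proof
    assume "v n = 1"
    with 3 v_even[of m] v_nonneg[of m] v_nonneg[of "Suc m"] have "b (m div 2) \<le> 2" by simp
    then obtain j r where r: "r \<in> {0, 2}" and jr: "Suc (m div 2) = 2 ^ j * Suc r"
      using b_le_2_imp_odd_iterate by blast
    from \<open>v n = 1\<close> 3 v_even_of_odd_iterate[OF r jr] have "int (Suc j) * (int (b r) - 1) = 1"
      by simp
    with r b_0 b_2 have "r = 2" "j = 0" by (auto simp: algebra_simps)
    with jr have "m div 2 = 2" by simp
    then have "m = 4 \<or> m = 5" by linarith
    with 3 show "n \<in> {10, 12}" by auto
  next
    assume "n \<in> {10, 12}"
    with 3 have "Suc (m div 2) = 2 ^ 0 * Suc 2" by auto
    from v_even_of_odd_iterate[OF _ this] 3 b_2 show "v n = 1" by simp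
  qed
qed

end
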